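(* Let $d_1,d_2,r\in\mathbb{N}_+$ and let $\mathcal{X}=\{\boldsymbol a_i\boldsymbol b_j^T:(i,j)\in[d_1]\times[d_2]\}$, where $\boldsymbol a_i\in\mathbb{R}^{d_1}$ and $\boldsymbol b_j\in\mathbb{R}^{d_2}$ are the standard basis vectors. Represent a function $f:\mathcal{X}\to[-1,1]$ by the matrix $\boldsymbol\Theta=[\![f(\boldsymbol a_i\boldsymbol b_j^T)]\!]\in[-1,1]^{d_1\times d_2}$. If $f$ is globally rank-$r$ sign representable, then $\max_{\pi\in[-1,1]}\mathrm{srank}(\boldsymbol\Theta-\pi)\le r+1$. Conversely, if $\max_{\pi\in[-1,1]}\mathrm{srank}(\boldsymbol\Theta-\pi)\le r$, then the function $f$ defined by $f(\boldsymbol a_i\boldsymbol b_j^T)=\Theta_{ij}$ is globally rank-$r$ sign representable.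
   Context: Sign convention: $\mathrm{sgn}(x)=1$ if $x>0$ and $\mathrm{sgn}(x)=-1$ otherwise; applied to matrices entrywise. For a matrix $\boldsymbol\Theta$ and scalar $\pi$, $\boldsymbol\Theta-\pi$ means subtracting $\pi$ from every entry. Sign rank: $\mathrm{srank}(\boldsymbol\Theta)=\min\{\mathrm{rank}(\boldsymbol\Theta'):\boldsymbol\Theta'\in\mathbb{R}^{d_1\times d_2},\ \mathrm{sgn}(\boldsymbol\Theta')=\mathrm{sgn}(\boldsymbol\Theta)\}$. A function $f:\mathcal{X}\to[-1,1]$ on $\mathcal{X}\subset\mathbb{R}^{d_1\times d_2}$ is $(r,\pi)$-sign representable if there exist a matrix $\boldsymbol B\in\mathbb{R}^{d_1\times d_2}$ of rank at most $r$ and $b\in\mathbb{R}$ with $\mathrm{sgn}(f(\boldsymbol X)-\pi)=\mathrm{sgn}(\langle\boldsymbol X,\boldsymbol B\rangle+b)$ for all $\boldsymbol X\in\mathcal{X}$, where $\langle\boldsymbol X,\boldsymbol B\rangle=\mathrm{tr}(\boldsymbol X\boldsymbol B^T)$; it is globally rank-$r$ sign representable if it is $(r,\pi)$-sign representable for every $\pi\in[-1,1]$. *)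

theory Defs
  imports "HOL-Analysis.Analysis"
begin

definition sgnp :: "real \<Rightarrow> real" where
  "sgnp x = (if x > 0 then 1 else -1)"

definition msgn :: "real^'n^'m \<Rightarrow> real^'n^'m" where
  "msgn A = (\<chi> i j. sgnp (A $ i $ j))"

definition msub :: "real^'n^'m \<Rightarrow> real \<Rightarrow> real^'n^'m" where
  "msub A p = (\<chi> i j. A $ i $ j - p)"

definition srank :: "real^'n^'m \<Rightarrow> nat" where
  "srank A = (LEAST k. \<exists>A'. rank A' = k \<and> msgn A' = msgn A)"

definition minner :: "real^'n^'m \<Rightarrow> real^'n^'m \<Rightarrow> real" where
  "minner X B = trace (X ** transpose B)"

definition sign_rep :: "nat \<Rightarrow> real \<Rightarrow> (real^'n^'m) set \<Rightarrow> (real^'n^'m \<Rightarrow> real) \<Rightarrow> bool" where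
  "sign_rep r p S f \<longleftrightarrow>
     (\<exists>B b. rank B \<le> r \<and> (\<forall>X\<in>S. sgnp (f X - p) = sgnp (minner X B + b)))"

definition global_sign_rep :: "nat \<Rightarrow> (real^'n^'m) set \<Rightarrow> (real^'n^'m \<Rightarrow> real) \<Rightarrow> bool" where
  "global_sign_rep r S f \<longleftrightarrow> (\<forall>p\<in>{-1..1}. sign_rep r p S f)"

text \<open>The matrix a_i b_j^T (standard basis vectors), i.e. the unit matrix with 1 at (i,j).\<close>
definition unitmat :: "'m \<Rightarrow> 'n \<Rightarrow> real^'n^'m" where
  "unitmat i j = (\<chi> k l. if k = i \<and> l = j then 1 else 0)"

definition basisX :: "(real^'n^'m) set" where
  "basisX = {unitmat i j | i j. True}"

end

theory Submission
  imports Defs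
begin

text \<open>On the basis matrices the affine functional X \<mapsto> \<langle>X, B\<rangle> + b reads off the entries of
  B + b, so a sign representation of f at level \<pi> is exactly a matrix B + b with the sign
  pattern of \<Theta> - \<pi>. Adding the constant matrix b costs at most one in rank, which gives the
  first direction; conversely a sign-rank witness for \<Theta> - \<pi> serves as B with b = 0.\<close>

lemma minner_unitmat: "minner (unitmat i j) B = B $ i $ j"
proof -
  have "minner (unitmat i j) B = (\<Sum>k\<in>UNIV. \<Sum>l\<in>UNIV. if k = i \<and> l = j then B $ k $ l else 0)"
    by (simp add: minner_def trace_def matrix_matrix_mult_def unitmat_def transpose_def
        if_distrib[of "\<lambda>x. x * _"] cong: if_cong)
  also have "\<dots> = (\<Sum>k\<in>UNIV. if k = i then B $ k $ j else 0)"
    by (intro sum.cong) auto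
  finally show ?thesis by simp
qed

lemma rank_msub_le: "rank (msub B c) \<le> rank B + 1"
proof -
  let ?c = "(\<chi> j. - c) :: real^'n"
  have "rows (msub B c) \<subseteq> span (insert ?c (rows B))"
  proof
    fix x assume "x \<in> rows (msub B c)"
    then obtain i where "x = row i (msub B c)" by (auto simp: rows_def)
    then have "x = row i B + ?c" by (simp add: row_def msub_def vec_eq_iff)
    moreover have "row i B \<in> span (insert ?c (rows B))" "?c \<in> span (insert ?c (rows B))"
      by (auto intro: span_base simp: rows_def)
    ultimately show "x \<in> span (insert ?c (rows B))" by (simp add: span_add)
  qed
  then have "dim (rows (msub B c)) \<le> dim (insert ?c (rows B))"
    by (metis dim_span dim_subset)
  also have "\<dots> \<le> dim (rows B) + 1" by (simp add: dim_insert)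
  finally show ?thesis by (simp add: row_rank_def)
qed

lemma msub_0 [simp]: "msub A 0 = A"
  by (simp add: msub_def vec_eq_iff)

lemma srank_le_rank: "msgn A' = msgn A \<Longrightarrow> srank A \<le> rank A'"
  unfolding srank_def by (intro Least_le) blast

lemma srank_witness: "\<exists>A'. rank A' = srank A \<and> msgn A' = msgn A"
  unfolding srank_def by (rule LeastI[of _ "rank A"]) blast

lemma msgn_eq_iff: "msgn A = msgn A' \<longleftrightarrow> (\<forall>i j. sgnp (A $ i $ j) = sgnp (A' $ i $ j))"
  by (simp add: msgn_def vec_eq_iff)

lemma sign_rep_basisX_iff:
  fixes f :: "real^'n^'m \<Rightarrow> real"
  assumes "\<forall>i j. \<Theta> $ i $ j = f (unitmat i j)"
  shows "sign_rep r p basisX f \<longleftrightarrow>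
    (\<exists>B b. rank B \<le> r \<and> msgn (msub B (- b)) = msgn (msub \<Theta> p))"
proof -
  have "(\<forall>X\<in>basisX. sgnp (f X - p) = sgnp (minner X B + b)) \<longleftrightarrow>
        (\<forall>i j. sgnp (f (unitmat i j) - p) = sgnp (B $ i $ j + b))" for B :: "real^'n^'m" and b
    by (fastforce simp: basisX_def minner_unitmat)
  also have "\<dots> B b \<longleftrightarrow> msgn (msub B (- b)) = msgn (msub \<Theta> p)" for B :: "real^'n^'m" and b
    using assms by (auto simp: msgn_eq_iff msub_def)
  finally show ?thesis unfolding sign_rep_def by simp
qed

theorem proposition1:
  fixes r :: nat and f :: "real^'n^'m \<Rightarrow> real" and \<Theta> :: "real^'n^'m"
  assumes "r \<ge> 1"
    and "\<forall>X\<in>basisX. f X \<in> {-1..1}"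
    and "\<forall>i j. \<Theta> $ i $ j = f (unitmat i j)"
  shows "(global_sign_rep r basisX f \<longrightarrow> (\<forall>p\<in>{-1..1}. srank (msub \<Theta> p) \<le> r + 1))
       \<and> ((\<forall>p\<in>{-1..1}. srank (msub \<Theta> p) \<le> r) \<longrightarrow> global_sign_rep r basisX f)"
proof (intro conjI impI ballI)
  fix p :: real
  assume "global_sign_rep r basisX f" and "p \<in> {-1..1}"
  then obtain B b where "rank B \<le> r" and sign_eq: "msgn (msub B (- b)) = msgn (msub \<Theta> p)"
    using sign_rep_basisX_iff[OF assms(3)] unfolding global_sign_rep_def by blast
  have "srank (msub \<Theta> p) \<le> rank (msub B (- b))" using sign_eq by (rule srank_le_rank)
  also have "\<dots> \<le> r + 1" using rank_msub_le[of B "- b"] \<open>rank B \<le> r\<close> by simp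
  finally show "srank (msub \<Theta> p) \<le> r + 1" .
next
  assume srank_le: "\<forall>p\<in>{-1..1}. srank (msub \<Theta> p) \<le> r"
  show "global_sign_rep r basisX f"
    unfolding global_sign_rep_def sign_rep_basisX_iff[OF assms(3)]
  proof
    fix p :: real assume "p \<in> {-1..1}"
    obtain A' where "rank A' = srank (msub \<Theta> p)" "msgn A' = msgn (msub \<Theta> p)"
      using srank_witness by blast
    then have "rank A' \<le> r \<and> msgn (msub A' (- 0)) = msgn (msub \<Theta> p)"
      using srank_le \<open>p \<in> {-1..1}\<close> by simp
    then show "\<exists>B b. rank B \<le> r \<and> msgn (msub B (- b)) = msgn (msub \<Theta> p)" by blast
  qed
qed

end
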